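(* Let $E$ be a directed graph, $S=M(\mathbb{Z},I)\cup\{0\}$, $w$ a canonical weight mapping on $E$, and $e$ a nonzero idempotent of $S$. Let $S_E=\{s\in S\setminus\{0\}:\ w(\mu)=s \text{ for some } \mu\in E^*\}$ and $S_e=\{s\in S_E: ss^{-1}=e\}$, and for $s,t\in S_e$ put $s\le t$ iff every path of weight $t$ contains an initial subpath of weight $s$. Then $S_e$ is a directed set with respect to $\le$.
   Context: Directed graph $E=(E^0,E^1,\mathrm{r},\mathrm{s})$; $E^*$ is the set of paths (finite sequences $\alpha_1\cdots\alpha_k$ of edges with $\mathrm{r}(\alpha_i)=\mathrm{s}(\alpha_{i+1})$, vertices being paths of length $0$); initial subpaths of $\alpha_1\cdots\alpha_k$ are $\mathrm{s}(\alpha_1)$ and $\alpha_1\cdots\alpha_m$, $m\le k$. $M(\mathbb{Z},I)=I\times\mathbb{Z}\times I$ with $(i,a,j)(k,b,l)=(i,a+b,l)$ if $j=k$, else undefined; $S=M(\mathbb{Z},I)\cup\{0\}$ with undefined products $0$, $0$ absorbing; $(i,a,j)^{-1}=(j,-a,i)$. Canonical weight mapping: each vertex gets weight $(i,0,i)$, each edge weight $(i,1,j)$, $w(\mathrm{s}(\alpha))w(\alpha)=w(\alpha)=w(\alpha)w(\mathrm{r}(\alpha))$; for each nonzero idempotent $f$ all edges whose source has weight $f$ have the same weight and all edges whose range has weight $f$ have the same weight; $w(\alpha_1\cdots\alpha_k)=w(\alpha_1)\cdots w(\alpha_k)$. A directed set is a set with a reflexive transitive relation in which any two elements have an upper bound.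 *)

theory Defs
  imports Main
begin

text \<open>The semigroup S = M(Z,I) \<union> {0}: None is 0, Some (i,a,j) is (i,a,j).
  The index set I is the type 'i.\<close>

type_synonym 'i S = "('i \<times> int \<times> 'i) option"

fun smult :: "'i S \<Rightarrow> 'i S \<Rightarrow> 'i S" where
  "smult (Some (i, a, j)) (Some (k, b, l)) = (if j = k then Some (i, a + b, l) else None)"
| "smult _ _ = None"

definition sinv :: "'i S \<Rightarrow> 'i S" where
  "sinv x = map_option (\<lambda>(i, a, j). (j, - a, i)) x"

definition nonzero_idempotent :: "'i S \<Rightarrow> bool" where
  "nonzero_idempotent f \<longleftrightarrow> f \<noteq> None \<and> smult f f = f"

text \<open>Directed graph E = (E0, E1, r, s). A path is represented as a pair (v, es):
  a vertex path is (v, []); an edge path alpha_1...alpha_k is (s(alpha_1), [alpha_1,...,alpha_k]).\<close>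

definition graph :: "'v set \<Rightarrow> 'e set \<Rightarrow> ('e \<Rightarrow> 'v) \<Rightarrow> ('e \<Rightarrow> 'v) \<Rightarrow> bool" where
  "graph E0 E1 r s \<longleftrightarrow> r ` E1 \<subseteq> E0 \<and> s ` E1 \<subseteq> E0"

definition is_path :: "'v set \<Rightarrow> 'e set \<Rightarrow> ('e \<Rightarrow> 'v) \<Rightarrow> ('e \<Rightarrow> 'v) \<Rightarrow> 'v \<times> 'e list \<Rightarrow> bool" where
  "is_path E0 E1 r s p \<longleftrightarrow>
     fst p \<in> E0 \<and> set (snd p) \<subseteq> E1 \<and>
     (snd p \<noteq> [] \<longrightarrow> s (hd (snd p)) = fst p) \<and>
     (\<forall>i. Suc i < length (snd p) \<longrightarrow> r (snd p ! i) = s (snd p ! Suc i))"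

definition initial_subpath :: "'v \<times> 'e list \<Rightarrow> 'v \<times> 'e list \<Rightarrow> bool" where
  "initial_subpath q p \<longleftrightarrow> (\<exists>m \<le> length (snd p). q = (fst p, take m (snd p)))"

fun sprod :: "'i S list \<Rightarrow> 'i S" where
  "sprod [] = None"
| "sprod [x] = x"
| "sprod (x # y # xs) = smult x (sprod (y # xs))"

definition path_weight :: "('v \<Rightarrow> 'i S) \<Rightarrow> ('e \<Rightarrow> 'i S) \<Rightarrow> 'v \<times> 'e list \<Rightarrow> 'i S" where
  "path_weight wv we p = (if snd p = [] then wv (fst p) else sprod (map we (snd p)))"

definition canonical_weight ::
  "'v set \<Rightarrow> 'e set \<Rightarrow> ('e \<Rightarrow> 'v) \<Rightarrow> ('e \<Rightarrow> 'v) \<Rightarrow> ('v \<Rightarrow> 'i S) \<Rightarrow> ('e \<Rightarrow> 'i S) \<Rightarrow> bool" where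
  "canonical_weight E0 E1 r s wv we \<longleftrightarrow>
     (\<forall>v\<in>E0. \<exists>i. wv v = Some (i, 0, i)) \<and>
     (\<forall>\<alpha>\<in>E1. \<exists>i j. we \<alpha> = Some (i, 1, j)) \<and>
     (\<forall>\<alpha>\<in>E1. smult (wv (s \<alpha>)) (we \<alpha>) = we \<alpha> \<and> we \<alpha> = smult (we \<alpha>) (wv (r \<alpha>))) \<and>
     (\<forall>f. nonzero_idempotent f \<longrightarrow>
        (\<forall>\<alpha>\<in>E1. \<forall>\<beta>\<in>E1. wv (s \<alpha>) = f \<and> wv (s \<beta>) = f \<longrightarrow> we \<alpha> = we \<beta>) \<and>
        (\<forall>\<alpha>\<in>E1. \<forall>\<beta>\<in>E1. wv (r \<alpha>) = f \<and> wv (r \<beta>) = f \<longrightarrow> we \<alpha> = we \<beta>))"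

definition S_E :: "'v set \<Rightarrow> 'e set \<Rightarrow> ('e \<Rightarrow> 'v) \<Rightarrow> ('e \<Rightarrow> 'v) \<Rightarrow> ('v \<Rightarrow> 'i S) \<Rightarrow> ('e \<Rightarrow> 'i S) \<Rightarrow> 'i S set" where
  "S_E E0 E1 r s wv we = {t. t \<noteq> None \<and> (\<exists>\<mu>. is_path E0 E1 r s \<mu> \<and> path_weight wv we \<mu> = t)}"

definition S_idem :: "'v set \<Rightarrow> 'e set \<Rightarrow> ('e \<Rightarrow> 'v) \<Rightarrow> ('e \<Rightarrow> 'v) \<Rightarrow> ('v \<Rightarrow> 'i S) \<Rightarrow> ('e \<Rightarrow> 'i S) \<Rightarrow> 'i S \<Rightarrow> 'i S set" where
  "S_idem E0 E1 r s wv we e = {t \<in> S_E E0 E1 r s wv we. smult t (sinv t) = e}"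

definition weight_le :: "'v set \<Rightarrow> 'e set \<Rightarrow> ('e \<Rightarrow> 'v) \<Rightarrow> ('e \<Rightarrow> 'v) \<Rightarrow> ('v \<Rightarrow> 'i S) \<Rightarrow> ('e \<Rightarrow> 'i S) \<Rightarrow> 'i S \<Rightarrow> 'i S \<Rightarrow> bool" where
  "weight_le E0 E1 r s wv we a b \<longleftrightarrow>
     (\<forall>p. is_path E0 E1 r s p \<and> path_weight wv we p = b \<longrightarrow>
        (\<exists>q. initial_subpath q p \<and> path_weight wv we q = a))"

definition directed_set :: "'a set \<Rightarrow> ('a \<Rightarrow> 'a \<Rightarrow> bool) \<Rightarrow> bool" where
  "directed_set A R \<longleftrightarrow>
     (\<forall>x\<in>A. R x x) \<and>
     (\<forall>x\<in>A. \<forall>y\<in>A. \<forall>z\<in>A. R x y \<and> R y z \<longrightarrow> R x z) \<and>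
     (\<forall>x\<in>A. \<forall>y\<in>A. \<exists>z\<in>A. R x z \<and> R y z)"

end

theory Submission
  imports Defs
begin

text \<open>A path of length n starting at a vertex of weight (i,0,i) has weight (i,n,j), and two paths
  with the same length whose initial vertices have equal weight have equal weight, because a
  canonical weight assigns the same weight to all edges leaving vertices of equal weight. Hence on
  S_e, where all paths start at vertices of weight e, the relation \<le> just compares path lengths:
  it is a total preorder, and the longer of two elements is an upper bound.\<close>

lemma smult_left_unitD: "smult f (Some (i, a, j)) = Some (i, a, j) \<Longrightarrow> f = Some (i, 0, i)"
  by (cases f) (auto split: if_splits)

lemma smult_right_unitD: "smult (Some (i, a, j)) f = Some (i, a, j) \<Longrightarrow> f = Some (j, 0, j)"
  by (cases f) (auto split: if_splits)

lemma is_path_take: "is_path E0 E1 r s (v, es) \<Longrightarrow> is_path E0 E1 r s (v, take m es)"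
  unfolding is_path_def by (auto dest: in_set_takeD simp: hd_take)

lemma is_path_ConsD:
  assumes "graph E0 E1 r s" and "is_path E0 E1 r s (v, a # rest)"
  shows "a \<in> E1" and "s a = v" and "is_path E0 E1 r s (r a, rest)"
proof -
  have links: "r ((a # rest) ! i) = s ((a # rest) ! Suc i)" if "Suc i < Suc (length rest)" for i
    using assms(2) that unfolding is_path_def by auto
  show "a \<in> E1" "s a = v" using assms(2) by (auto simp: is_path_def)
  with assms(1) have "r a \<in> E0" by (auto simp: graph_def)
  moreover have "s (hd rest) = r a" if "rest \<noteq> []"
    using links[of 0] that by (cases rest) auto
  moreover have "r (rest ! i) = s (rest ! Suc i)" if "Suc i < length rest" for i
    using links[of "Suc i"] that by simp
  ultimately show "is_path E0 E1 r s (r a, rest)"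
    using assms(2) by (auto simp: is_path_def)
qed

lemma weight_le_refl: "weight_le E0 E1 r s wv we x x"
  unfolding weight_le_def initial_subpath_def by (metis order_refl prod.collapse take_all)

lemma weight_le_trans:
  assumes "weight_le E0 E1 r s wv we x y" and "weight_le E0 E1 r s wv we y z"
  shows "weight_le E0 E1 r s wv we x z"
  unfolding weight_le_def
proof (intro allI impI)
  fix p assume p: "is_path E0 E1 r s p \<and> path_weight wv we p = z"
  then obtain m where m: "m \<le> length (snd p)" "path_weight wv we (fst p, take m (snd p)) = y"
    using assms(2) unfolding weight_le_def initial_subpath_def by blast
  have "is_path E0 E1 r s (fst p, take m (snd p))"
    using p is_path_take[of E0 E1 r s "fst p" "snd p"] by simp
  then obtain q where "initial_subpath q (fst p, take m (snd p))" "path_weight wv we q = x"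
    using assms(1) m(2) unfolding weight_le_def by blast
  then obtain m' where "path_weight wv we (fst p, take m' (take m (snd p))) = x"
    unfolding initial_subpath_def by auto
  then have "initial_subpath (fst p, take (min m' m) (snd p)) p \<and>
      path_weight wv we (fst p, take (min m' m) (snd p)) = x"
    using m(1) unfolding initial_subpath_def by (auto intro!: exI[of _ "min m' m"] simp: min.commute)
  then show "\<exists>q. initial_subpath q p \<and> path_weight wv we q = x" by blast
qed

locale canonically_weighted_graph =
  fixes E0 :: "'v set" and E1 :: "'e set" and r s :: "'e \<Rightarrow> 'v"
    and wv :: "'v \<Rightarrow> 'i S" and we :: "'e \<Rightarrow> 'i S"
  assumes graph: "graph E0 E1 r s"
    and canonical: "canonical_weight E0 E1 r s wv we"
begin

abbreviation path :: "'v \<times> 'e list \<Rightarrow> bool" where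
  "path \<equiv> is_path E0 E1 r s"

abbreviation weight :: "'v \<times> 'e list \<Rightarrow> 'i S" where
  "weight \<equiv> path_weight wv we"

lemma edge_weight:
  assumes "a \<in> E1"
  obtains i j where "we a = Some (i, 1, j)" and "wv (s a) = Some (i, 0, i)"
    and "wv (r a) = Some (j, 0, j)"
proof -
  obtain i j where w: "we a = Some (i, 1, j)"
    using canonical assms unfolding canonical_weight_def by blast
  have "smult (wv (s a)) (we a) = we a" and "smult (we a) (wv (r a)) = we a"
    using canonical assms unfolding canonical_weight_def by auto
  with w show thesis
    using that smult_left_unitD smult_right_unitD by metis
qed

lemma path_weight_Cons:
  assumes "a \<in> E1"
  shows "weight (v, a # rest) = smult (we a) (weight (r a, rest))"
proof (cases rest)
  case Nil
  have "we a = smult (we a) (wv (r a))"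
    using canonical assms unfolding canonical_weight_def by blast
  with Nil show ?thesis by (simp add: path_weight_def)
qed (simp add: path_weight_def)

lemma path_weight_shape:
  "path (v, es) \<Longrightarrow>
    \<exists>i j. wv v = Some (i, 0, i) \<and> weight (v, es) = Some (i, int (length es), j)"
proof (induction es arbitrary: v)
  case Nil
  then have "v \<in> E0" by (simp add: is_path_def)
  then show ?case
    using canonical unfolding canonical_weight_def by (auto simp: path_weight_def)
next
  case (Cons a rest)
  note a = is_path_ConsD[OF graph Cons.prems]
  obtain i j where "we a = Some (i, 1, j)" "wv (s a) = Some (i, 0, i)"
    and range_weight: "wv (r a) = Some (j, 0, j)"
    using edge_weight[OF a(1)] .
  moreover obtain k where "weight (r a, rest) = Some (j, int (length rest), k)"
    using Cons.IH[OF a(3)] range_weight by auto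
  ultimately show ?case
    using a(1,2) path_weight_Cons[OF a(1)] by auto
qed

lemma edge_weight_eqI:
  assumes "a \<in> E1" and "b \<in> E1" and "wv (s a) = wv (s b)"
  shows "we a = we b"
proof -
  obtain i j where "wv (s a) = Some (i, 0, i)"
    using edge_weight[OF assms(1)] .
  then have "nonzero_idempotent (wv (s a))"
    by (simp add: nonzero_idempotent_def)
  with canonical have "\<forall>\<alpha>\<in>E1. \<forall>\<beta>\<in>E1. wv (s \<alpha>) = wv (s a) \<and> wv (s \<beta>) = wv (s a) \<longrightarrow> we \<alpha> = we \<beta>"
    unfolding canonical_weight_def by blast
  with assms show ?thesis by metis
qed

lemma path_weight_eqI:
  "path (v, es) \<Longrightarrow> path (v', es') \<Longrightarrow> length es = length es' \<Longrightarrow> wv v = wv v' \<Longrightarrow>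
    weight (v, es) = weight (v', es')"
proof (induction es arbitrary: v v' es')
  case Nil
  then show ?case by (simp add: path_weight_def)
next
  case (Cons a rest)
  then obtain b rest' where es': "es' = b # rest'" by (cases es') auto
  note a = is_path_ConsD[OF graph Cons.prems(1)]
  note b = is_path_ConsD[OF graph Cons.prems(2)[unfolded es']]
  have same_edge_weight: "we a = we b"
    using edge_weight_eqI[OF a(1) b(1)] a(2) b(2) Cons.prems(4) by simp
  obtain i j where "we a = Some (i, 1, j)" "wv (s a) = Some (i, 0, i)"
    "wv (r a) = Some (j, 0, j)"
    using edge_weight[OF a(1)] .
  moreover obtain i' j' where "we b = Some (i', 1, j')" "wv (s b) = Some (i', 0, i')"
    "wv (r b) = Some (j', 0, j')"
    using edge_weight[OF b(1)] .
  ultimately have "wv (r a) = wv (r b)"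
    using same_edge_weight by simp
  then have "weight (r a, rest) = weight (r b, rest')"
    using Cons.IH[OF a(3) b(3)] Cons.prems(3) es' by simp
  then show ?case
    using path_weight_Cons[OF a(1)] path_weight_Cons[OF b(1)] same_edge_weight es' by simp
qed

lemma S_idem_path:
  assumes "x \<in> S_idem E0 E1 r s wv we e"
  obtains v es where "path (v, es)" and "weight (v, es) = x" and "wv v = e"
proof -
  obtain v es where p: "path (v, es)" "weight (v, es) = x" and "smult x (sinv x) = e"
    using assms unfolding S_idem_def S_E_def by auto
  moreover obtain i j where "wv v = Some (i, 0, i)" "x = Some (i, int (length es), j)"
    using path_weight_shape[OF p(1)] p(2) by auto
  ultimately show thesis
    using that by (simp add: sinv_def)
qed

lemma weight_le_if_length_le:
  assumes "path (v, es)" and "path (v', es')" and "wv v = wv v'" and "length es \<le> length es'"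
  shows "weight_le E0 E1 r s wv we (weight (v, es)) (weight (v', es'))"
  unfolding weight_le_def
proof (intro allI impI, elim conjE)
  fix p assume p: "path p" "weight p = weight (v', es')"
  obtain u fs where u: "p = (u, fs)" by (cases p)
  have "wv u = wv v' \<and> length fs = length es'"
    using path_weight_shape[OF assms(2)] path_weight_shape[OF p(1)[unfolded u]] p(2) u by auto
  then have "weight (u, take (length es) fs) = weight (v, es)"
    using path_weight_eqI[OF is_path_take[OF p(1)[unfolded u]] assms(1)] assms(3,4) by simp
  moreover have "initial_subpath (u, take (length es) fs) p"
    unfolding initial_subpath_def u
    using assms(4) \<open>wv u = wv v' \<and> length fs = length es'\<close> by auto
  ultimately show "\<exists>q. initial_subpath q p \<and> weight q = weight (v, es)" by blast
qed

lemma S_idem_weight_le_total: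
  assumes "x \<in> S_idem E0 E1 r s wv we e" and "y \<in> S_idem E0 E1 r s wv we e"
  shows "weight_le E0 E1 r s wv we x y \<or> weight_le E0 E1 r s wv we y x"
proof -
  obtain v es where x: "path (v, es)" "weight (v, es) = x" "wv v = e"
    using S_idem_path[OF assms(1)] .
  obtain v' es' where y: "path (v', es')" "weight (v', es') = y" "wv v' = e"
    using S_idem_path[OF assms(2)] .
  show ?thesis
    using weight_le_if_length_le[OF x(1) y(1)] weight_le_if_length_le[OF y(1) x(1)] x y
    by (metis nat_le_linear)
qed

end

theorem lemma5p7:
  fixes E0 :: "'v set" and E1 :: "'e set" and r s :: "'e \<Rightarrow> 'v"
    and wv :: "'v \<Rightarrow> 'i S" and we :: "'e \<Rightarrow> 'i S" and e :: "'i S"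
  assumes "graph E0 E1 r s"
    and "canonical_weight E0 E1 r s wv we"
    and "nonzero_idempotent e"
  shows "directed_set (S_idem E0 E1 r s wv we e) (weight_le E0 E1 r s wv we)"
proof -
  interpret canonically_weighted_graph E0 E1 r s wv we
    using assms(1,2) by unfold_locales
  have "\<exists>z\<in>S_idem E0 E1 r s wv we e. weight_le E0 E1 r s wv we x z \<and> weight_le E0 E1 r s wv we y z"
    if "x \<in> S_idem E0 E1 r s wv we e" and "y \<in> S_idem E0 E1 r s wv we e" for x y
    using S_idem_weight_le_total[OF that] that weight_le_refl by blast
  then show ?thesis
    unfolding directed_set_def using weight_le_refl weight_le_trans by blast
qed

end
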